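(* Let $(\mathfrak g,D)$ be a difference Lie algebra over $\mathbb R$. Then the map sending an infinitesimal deformation generated by $(\hat\omega,\hat D)$ to the class $[(\hat\omega,\hat D)]$ induces a bijection between equivalence classes of infinitesimal deformations of $(\mathfrak g,D)$ and the second regular cohomology group $\mathcal H^2(\mathfrak g,D)$.
   Context: A difference Lie algebra $(\mathfrak g,D)$: a Lie algebra $\mathfrak g$ with linear $D$ satisfying $D[x,y]=[x,D(y)]-[y,D(x)]+[D(x),D(y)]$. On $\mathbb R[t]/(t^2)\otimes\mathfrak g$ extend the bracket bilinearly and $D$ linearly over $\mathbb R[t]/(t^2)$. Linear maps $\hat\omega:\wedge^2\mathfrak g\to\mathfrak g$, $\hat D:\mathfrak g\to\mathfrak g$ generate an infinitesimal deformation if $[\cdot,\cdot]_t=[\cdot,\cdot]+t\hat\omega$ is a Lie bracket on $\mathbb R[t]/(t^2)\otimes\mathfrak g$ and $D_t=D+t\hat D$ is a difference operator for it. Two infinitesimal deformations $([\cdot,\cdot]^1_t,D^1_t)$, $([\cdot,\cdot]^2_t,D^2_t)$ are equivalent if there is $N\in\mathrm{Hom}(\mathfrak g,\mathfrak g)$ such that $\varphi_t=\mathrm{Id}+tN$ satisfies $\varphi_t[x,y]^1_t=[\varphi_tx,\varphi_ty]^2_t$ for all $x,y\in\mathfrak g$ and $D^2_t\circ\varphi_t=\varphi_t\circ D^1_t$ as $\mathbb R[t]/(t^2)$-module maps. Regular cohomology: $C^1(\mathfrak g,D)=\mathrm{Hom}(\mathfrak g,\mathfrak g)$, $C^n(\mathfrak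 g,D)=\mathrm{Hom}(\wedge^n\mathfrak g,\mathfrak g)\oplus\mathrm{Hom}(\wedge^{n-1}\mathfrak g,\mathfrak g)$ ($n\ge2$), $\bar\delta(f,\theta)=(d^{CE}_{\mathrm{ad}}f,d^{CE}_{\mathrm{ad}_D}\theta+T(f))$ (for $n=1$, $\bar\delta f=(d^{CE}_{\mathrm{ad}}f,T(f))$), where $d^{CE}_{\mathrm{ad}}$, $d^{CE}_{\mathrm{ad}_D}$ are Chevalley–Eilenberg differentials with coefficients in the adjoint representation and in $\mathrm{ad}_D(x)u=[x,u]+[D(x),u]$, and $T(f)(x_1,\dots,x_n)=(-1)^n\big(\sum_{k=1}^n\sum_{1\le i_1<\cdots<i_k\le n}f(y_1,\dots,y_n)-D(f(x_1,\dots,x_n))\big)$ with $y_j=D(x_j)$ for $j\in\{i_1,\dots,i_k\}$, $y_j=x_j$ otherwise. $\mathcal H^n(\mathfrak g,D)$ is the $n$-th cohomology of this complex. *)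

theory Defs
  imports "HOL-Analysis.Analysis"
begin

definition lie_algebra :: "('a::real_vector \<Rightarrow> 'a \<Rightarrow> 'a) \<Rightarrow> bool" where
  "lie_algebra br \<longleftrightarrow> bilinear br \<and> (\<forall>x. br x x = 0) \<and>
     (\<forall>x y z. br x (br y z) + br y (br z x) + br z (br x y) = 0)"

definition difference_op :: "('a::real_vector \<Rightarrow> 'a \<Rightarrow> 'a) \<Rightarrow> ('a \<Rightarrow> 'a) \<Rightarrow> bool" where
  "difference_op br D \<longleftrightarrow> linear D \<and>
     (\<forall>x y. D (br x y) = br x (D y) - br y (D x) + br (D x) (D y))"

definition diff_lie_algebra :: "('a::real_vector \<Rightarrow> 'a \<Rightarrow> 'a) \<Rightarrow> ('a \<Rightarrow> 'a) \<Rightarrow> bool" where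
  "diff_lie_algebra br D \<longleftrightarrow> lie_algebra br \<and> difference_op br D"

definition alt2 :: "('a::real_vector \<Rightarrow> 'a \<Rightarrow> 'a) \<Rightarrow> bool" where
  "alt2 f \<longleftrightarrow> bilinear f \<and> (\<forall>x. f x x = 0)"

text \<open>An element x0 + t x1 of R[t]/(t^2) (x) g is represented by the pair (x0, x1).\<close>

definition tbr :: "('a::real_vector \<Rightarrow> 'a \<Rightarrow> 'a) \<Rightarrow> ('a \<Rightarrow> 'a \<Rightarrow> 'a) \<Rightarrow> 'a \<times> 'a \<Rightarrow> 'a \<times> 'a \<Rightarrow> 'a \<times> 'a" where
  "tbr br \<omega> p q = (br (fst p) (fst q), br (fst p) (snd q) + br (snd p) (fst q) + \<omega> (fst p) (fst q))"

definition tD :: "('a::real_vector \<Rightarrow> 'a) \<Rightarrow> ('a \<Rightarrow> 'a) \<Rightarrow> 'a \<times> 'a \<Rightarrow> 'a \<times> 'a" where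
  "tD D Dh p = (D (fst p), D (snd p) + Dh (fst p))"

text \<open>phi_t = Id + t N acting on R[t]/(t^2) (x) g\<close>
definition tphi :: "('a::real_vector \<Rightarrow> 'a) \<Rightarrow> 'a \<times> 'a \<Rightarrow> 'a \<times> 'a" where
  "tphi N p = (fst p, snd p + N (fst p))"

definition inf_deformation ::
  "('a::real_vector \<Rightarrow> 'a \<Rightarrow> 'a) \<Rightarrow> ('a \<Rightarrow> 'a) \<Rightarrow> ('a \<Rightarrow> 'a \<Rightarrow> 'a) \<Rightarrow> ('a \<Rightarrow> 'a) \<Rightarrow> bool" where
  "inf_deformation br D \<omega> Dh \<longleftrightarrow> alt2 \<omega> \<and> linear Dh \<and>
     diff_lie_algebra (tbr br \<omega>) (tD D Dh)"

definition deformations :: "('a::real_vector \<Rightarrow> 'a \<Rightarrow> 'a) \<Rightarrow> ('a \<Rightarrow> 'a) \<Rightarrow>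
    (('a \<Rightarrow> 'a \<Rightarrow> 'a) \<times> ('a \<Rightarrow> 'a)) set" where
  "deformations br D = {(\<omega>, Dh). inf_deformation br D \<omega> Dh}"

definition deform_equiv :: "('a::real_vector \<Rightarrow> 'a \<Rightarrow> 'a) \<Rightarrow> ('a \<Rightarrow> 'a) \<Rightarrow>
    ('a \<Rightarrow> 'a \<Rightarrow> 'a) \<times> ('a \<Rightarrow> 'a) \<Rightarrow> ('a \<Rightarrow> 'a \<Rightarrow> 'a) \<times> ('a \<Rightarrow> 'a) \<Rightarrow> bool" where
  "deform_equiv br D d1 d2 \<longleftrightarrow> (\<exists>N. linear N \<and>
     (\<forall>x y. tphi N (tbr br (fst d1) (x, 0) (y, 0)) = tbr br (fst d2) (tphi N (x, 0)) (tphi N (y, 0))) \<and>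
     (\<forall>p. tD D (snd d2) (tphi N p) = tphi N (tD D (snd d1) p)))"

definition deform_rel :: "('a::real_vector \<Rightarrow> 'a \<Rightarrow> 'a) \<Rightarrow> ('a \<Rightarrow> 'a) \<Rightarrow>
    ((('a \<Rightarrow> 'a \<Rightarrow> 'a) \<times> ('a \<Rightarrow> 'a)) \<times> (('a \<Rightarrow> 'a \<Rightarrow> 'a) \<times> ('a \<Rightarrow> 'a))) set" where
  "deform_rel br D = {(d1, d2). d1 \<in> deformations br D \<and> d2 \<in> deformations br D \<and> deform_equiv br D d1 d2}"

text \<open>Chevalley-Eilenberg differential (adjoint coefficients) on 2-cochains.\<close>
definition dCE2 :: "('a::real_vector \<Rightarrow> 'a \<Rightarrow> 'a) \<Rightarrow> ('a \<Rightarrow> 'a \<Rightarrow> 'a) \<Rightarrow> 'a \<Rightarrow> 'a \<Rightarrow> 'a \<Rightarrow> 'a" where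
  "dCE2 br f x1 x2 x3 =
     br x1 (f x2 x3) - br x2 (f x1 x3) + br x3 (f x1 x2)
     - f (br x1 x2) x3 + f (br x1 x3) x2 - f (br x2 x3) x1"

text \<open>Chevalley-Eilenberg differential on 1-cochains with coefficients in a representation rho.\<close>
definition dCE1 :: "('a::real_vector \<Rightarrow> 'a \<Rightarrow> 'a) \<Rightarrow> ('a \<Rightarrow> 'a \<Rightarrow> 'a) \<Rightarrow> ('a \<Rightarrow> 'a) \<Rightarrow> 'a \<Rightarrow> 'a \<Rightarrow> 'a" where
  "dCE1 br \<rho> f x y = \<rho> x (f y) - \<rho> y (f x) - f (br x y)"

definition ad :: "('a::real_vector \<Rightarrow> 'a \<Rightarrow> 'a) \<Rightarrow> 'a \<Rightarrow> 'a \<Rightarrow> 'a" where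
  "ad br x u = br x u"

definition adD :: "('a::real_vector \<Rightarrow> 'a \<Rightarrow> 'a) \<Rightarrow> ('a \<Rightarrow> 'a) \<Rightarrow> 'a \<Rightarrow> 'a \<Rightarrow> 'a" where
  "adD br D x u = br x u + br (D x) u"

definition T1 :: "('a::real_vector \<Rightarrow> 'a) \<Rightarrow> ('a \<Rightarrow> 'a) \<Rightarrow> 'a \<Rightarrow> 'a" where
  "T1 D f x = - (f (D x) - D (f x))"

definition T2 :: "('a::real_vector \<Rightarrow> 'a) \<Rightarrow> ('a \<Rightarrow> 'a \<Rightarrow> 'a) \<Rightarrow> 'a \<Rightarrow> 'a \<Rightarrow> 'a" where
  "T2 D f x1 x2 = (f (D x1) x2 + f x1 (D x2) + f (D x1) (D x2)) - D (f x1 x2)"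

definition C2 :: "(('a::real_vector \<Rightarrow> 'a \<Rightarrow> 'a) \<times> ('a \<Rightarrow> 'a)) set" where
  "C2 = {(f, \<theta>). alt2 f \<and> linear \<theta>}"

definition delta2 :: "('a::real_vector \<Rightarrow> 'a \<Rightarrow> 'a) \<Rightarrow> ('a \<Rightarrow> 'a) \<Rightarrow>
    ('a \<Rightarrow> 'a \<Rightarrow> 'a) \<times> ('a \<Rightarrow> 'a) \<Rightarrow> ('a \<Rightarrow> 'a \<Rightarrow> 'a \<Rightarrow> 'a) \<times> ('a \<Rightarrow> 'a \<Rightarrow> 'a)" where
  "delta2 br D c = (dCE2 br (fst c), (\<lambda>x y. dCE1 br (adD br D) (snd c) x y + T2 D (fst c) x y))"

definition delta1 :: "('a::real_vector \<Rightarrow> 'a \<Rightarrow> 'a) \<Rightarrow> ('a \<Rightarrow> 'a) \<Rightarrow>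
    ('a \<Rightarrow> 'a) \<Rightarrow> ('a \<Rightarrow> 'a \<Rightarrow> 'a) \<times> ('a \<Rightarrow> 'a)" where
  "delta1 br D N = (dCE1 br (ad br) N, T1 D N)"

definition Z2 :: "('a::real_vector \<Rightarrow> 'a \<Rightarrow> 'a) \<Rightarrow> ('a \<Rightarrow> 'a) \<Rightarrow> (('a \<Rightarrow> 'a \<Rightarrow> 'a) \<times> ('a \<Rightarrow> 'a)) set" where
  "Z2 br D = {c \<in> C2. delta2 br D c = ((\<lambda>x y z. 0), (\<lambda>x y. 0))}"

definition B2 :: "('a::real_vector \<Rightarrow> 'a \<Rightarrow> 'a) \<Rightarrow> ('a \<Rightarrow> 'a) \<Rightarrow> (('a \<Rightarrow> 'a \<Rightarrow> 'a) \<times> ('a \<Rightarrow> 'a)) set" where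
  "B2 br D = {delta1 br D N | N. linear N}"

definition coh_rel :: "('a::real_vector \<Rightarrow> 'a \<Rightarrow> 'a) \<Rightarrow> ('a \<Rightarrow> 'a) \<Rightarrow>
    ((('a \<Rightarrow> 'a \<Rightarrow> 'a) \<times> ('a \<Rightarrow> 'a)) \<times> (('a \<Rightarrow> 'a \<Rightarrow> 'a) \<times> ('a \<Rightarrow> 'a))) set" where
  "coh_rel br D = {(c, c'). c \<in> Z2 br D \<and> c' \<in> Z2 br D \<and>
      ((\<lambda>x y. fst c x y - fst c' x y), (\<lambda>x. snd c x - snd c' x)) \<in> B2 br D}"

definition H2 :: "('a::real_vector \<Rightarrow> 'a \<Rightarrow> 'a) \<Rightarrow> ('a \<Rightarrow> 'a) \<Rightarrow> (('a \<Rightarrow> 'a \<Rightarrow> 'a) \<times> ('a \<Rightarrow> 'a)) set set" where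
  "H2 br D = Z2 br D // coh_rel br D"

end

theory Submission
  imports Defs
begin

text \<open>
  Writing the deformed bracket and difference operator on pairs (x0, x1) = x0 + t x1, the
  t^0-components of the Jacobi identity and of the difference-operator identity are those of
  (g, D), and their t^1-components reduce, via the Jacobi and difference identities of
  (g, D), to the vanishing of the two components of the regular coboundary of
  (\<omega>, D-hat). Hence the infinitesimal deformations are exactly the regular 2-cocycles.
  Likewise, Id + t N intertwines two deformations iff their difference is the regular
  coboundary of N. So both quotients are the same set and the class map is the identity.
\<close>

lemma alternating_bilinear_skew:
  assumes "bilinear f" "\<forall>x. f x x = 0"
  shows "f x y = - f y x"
proof -
  have "f (x + y) (x + y) = 0" using assms(2) by blast
  hence "f x x + f x y + (f y x + f y y) = 0"
    using assms(1) by (simp add: bilinear_ladd bilinear_radd add.assoc)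
  thus ?thesis using assms(2) by (simp add: eq_neg_iff_add_eq_0)
qed

lemma lie_algebra_skew: "lie_algebra br \<Longrightarrow> br x y = - br y x"
  unfolding lie_algebra_def by (blast intro: alternating_bilinear_skew)

lemma alt2_skew: "alt2 f \<Longrightarrow> f x y = - f y x"
  unfolding alt2_def by (blast intro: alternating_bilinear_skew)

lemma bilinear_tbr:
  assumes "bilinear br" "bilinear \<omega>"
  shows "bilinear (tbr br \<omega>)"
  unfolding bilinear_def
proof (intro conjI allI)
  fix p :: "'a \<times> 'a"
  show "linear (tbr br \<omega> p)"
    by (rule linearI) (auto simp: tbr_def assms[THEN bilinear_radd] assms[THEN bilinear_rmul]
        prod_eq_iff scaleR_add_right algebra_simps)
  show "linear (\<lambda>q. tbr br \<omega> q p)"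
    by (rule linearI) (auto simp: tbr_def assms[THEN bilinear_ladd] assms[THEN bilinear_lmul]
        prod_eq_iff scaleR_add_right algebra_simps)
qed

lemma linear_tD:
  assumes "linear D" "linear Dh"
  shows "linear (tD D Dh)"
  by (rule linearI) (auto simp: tD_def prod_eq_iff assms[THEN linear_add] assms[THEN linear_scale]
      scaleR_add_right)

lemma tbr_alternating:
  assumes "lie_algebra br" "alt2 \<omega>"
  shows "tbr br \<omega> p p = 0"
  using lie_algebra_skew[OF assms(1), of "fst p" "snd p"] assms
  by (simp add: tbr_def prod_eq_iff lie_algebra_def alt2_def)

lemma fst_jacobiator_tbr:
  assumes "lie_algebra br"
  shows "fst (tbr br \<omega> p (tbr br \<omega> q r) + tbr br \<omega> q (tbr br \<omega> r p) + tbr br \<omega> r (tbr br \<omega> p q)) = 0"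
  using assms by (simp add: tbr_def lie_algebra_def)

lemma snd_jacobiator_tbr:
  assumes "lie_algebra br" "alt2 \<omega>"
  shows "snd (tbr br \<omega> p (tbr br \<omega> q r) + tbr br \<omega> q (tbr br \<omega> r p) + tbr br \<omega> r (tbr br \<omega> p q))
     = dCE2 br \<omega> (fst p) (fst q) (fst r)"
proof -
  obtain x x1 y y1 z z1 where pqr: "p = (x, x1)" "q = (y, y1)" "r = (z, z1)"
    by (metis prod.collapse)
  have b: "bilinear br" and jacobi: "\<And>x y z. br x (br y z) + br y (br z x) + br z (br x y) = 0"
    using assms(1) unfolding lie_algebra_def by auto
  have "snd (tbr br \<omega> p (tbr br \<omega> q r) + tbr br \<omega> q (tbr br \<omega> r p) + tbr br \<omega> r (tbr br \<omega> p q))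
     = (br x (\<omega> y z) + br y (\<omega> z x) + br z (\<omega> x y) + \<omega> x (br y z) + \<omega> y (br z x) + \<omega> z (br x y))
      + (br x1 (br y z) + br y (br z x1) + br z (br x1 y))
      + (br x (br y1 z) + br y1 (br z x) + br z (br x y1))
      + (br x (br y z1) + br y (br z1 x) + br z1 (br x y))"
    unfolding pqr by (simp add: tbr_def b[THEN bilinear_radd] algebra_simps)
  also have "\<dots> = br x (\<omega> y z) + br y (\<omega> z x) + br z (\<omega> x y)
      + \<omega> x (br y z) + \<omega> y (br z x) + \<omega> z (br x y)"
    by (simp only: jacobi add_0_right)
  also have "\<dots> = dCE2 br \<omega> x y z"
  proof -
    have "br y (\<omega> x z) = - br y (\<omega> z x)"
      using alt2_skew[OF assms(2), of x z] bilinear_rneg[OF b] by simp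
    moreover have "\<omega> (br x z) y = \<omega> y (br z x)"
      using alt2_skew[OF assms(2), of "br x z" y] lie_algebra_skew[OF assms(1), of x z]
        bilinear_rneg[of \<omega>] assms(2) by (simp add: alt2_def)
    moreover have "\<omega> (br x y) z = - \<omega> z (br x y)" "\<omega> (br y z) x = - \<omega> x (br y z)"
      using alt2_skew[OF assms(2)] by blast+
    ultimately show ?thesis by (simp add: dCE2_def algebra_simps)
  qed
  finally show ?thesis by (simp add: pqr)
qed

lemma fst_difference_defect_tbr:
  assumes "difference_op br D"
  shows "fst (tD D Dh (tbr br \<omega> p q)) = fst (tbr br \<omega> p (tD D Dh q) - tbr br \<omega> q (tD D Dh p)
      + tbr br \<omega> (tD D Dh p) (tD D Dh q))"
  using assms by (simp add: tD_def tbr_def difference_op_def)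

lemma snd_difference_defect_tbr:
  assumes "diff_lie_algebra br D" "alt2 \<omega>"
  shows "snd (tD D Dh (tbr br \<omega> p q)) - snd (tbr br \<omega> p (tD D Dh q) - tbr br \<omega> q (tD D Dh p)
      + tbr br \<omega> (tD D Dh p) (tD D Dh q))
     = - (dCE1 br (adD br D) Dh (fst p) (fst q) + T2 D \<omega> (fst p) (fst q))"
proof -
  obtain x x1 y y1 where pq: "p = (x, x1)" "q = (y, y1)"
    by (metis prod.collapse)
  have la: "lie_algebra br" and b: "bilinear br" and lD: "linear D"
    and difference: "\<And>x y. D (br x y) - (br x (D y) - br y (D x) + br (D x) (D y)) = 0"
    using assms(1) unfolding diff_lie_algebra_def difference_op_def lie_algebra_def by auto
  have "snd (tD D Dh (tbr br \<omega> p q)) - snd (tbr br \<omega> p (tD D Dh q) - tbr br \<omega> q (tD D Dh p)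
      + tbr br \<omega> (tD D Dh p) (tD D Dh q))
     = (D (\<omega> x y) + Dh (br x y) - (br x (Dh y) + \<omega> x (D y) - br y (Dh x) - \<omega> y (D x)
          + br (D x) (Dh y) + br (Dh x) (D y) + \<omega> (D x) (D y)))
      + (D (br x y1) - (br x (D y1) - br y1 (D x) + br (D x) (D y1)))
      + (D (br x1 y) - (br x1 (D y) - br y (D x1) + br (D x1) (D y)))"
    unfolding pq by (simp add: tbr_def tD_def b[THEN bilinear_radd] b[THEN bilinear_ladd]
        lD[THEN linear_add] algebra_simps)
  also have "\<dots> = D (\<omega> x y) + Dh (br x y) - (br x (Dh y) + \<omega> x (D y) - br y (Dh x) - \<omega> y (D x)
          + br (D x) (Dh y) + br (Dh x) (D y) + \<omega> (D x) (D y))"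
    by (simp only: difference add_0_right)
  also have "\<dots> = - (dCE1 br (adD br D) Dh x y + T2 D \<omega> x y)"
    using lie_algebra_skew[OF la, of "Dh x" "D y"] alt2_skew[OF assms(2), of "D x" y]
    by (simp add: dCE1_def adD_def T2_def algebra_simps)
  finally show ?thesis by (simp add: pq)
qed

lemma lie_algebra_tbr_iff:
  assumes "lie_algebra br" "alt2 \<omega>"
  shows "lie_algebra (tbr br \<omega>) \<longleftrightarrow> (\<forall>x y z. dCE2 br \<omega> x y z = 0)"
proof
  assume "lie_algebra (tbr br \<omega>)"
  then show "\<forall>x y z. dCE2 br \<omega> x y z = 0"
    using snd_jacobiator_tbr[OF assms, of "(_, 0)" "(_, 0)" "(_, 0)"]
    by (simp add: lie_algebra_def)
next
  assume "\<forall>x y z. dCE2 br \<omega> x y z = 0"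
  moreover have "bilinear (tbr br \<omega>)"
    using assms by (intro bilinear_tbr) (auto simp: lie_algebra_def alt2_def)
  ultimately show "lie_algebra (tbr br \<omega>)"
    using tbr_alternating[OF assms] fst_jacobiator_tbr[OF assms(1)] snd_jacobiator_tbr[OF assms]
    by (simp add: lie_algebra_def prod_eq_iff)
qed

lemma difference_op_tbr_iff:
  assumes "diff_lie_algebra br D" "alt2 \<omega>" "linear Dh"
  shows "difference_op (tbr br \<omega>) (tD D Dh) \<longleftrightarrow>
    (\<forall>x y. dCE1 br (adD br D) Dh x y + T2 D \<omega> x y = 0)"
proof -
  have dop: "difference_op br D" and lD: "linear D"
    using assms(1) by (auto simp: diff_lie_algebra_def difference_op_def)
  have pair_eq: "a = b \<longleftrightarrow> fst a = fst b \<and> snd a - snd b = 0" for a b :: "'a \<times> 'a"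
    by (simp add: prod_eq_iff)
  show ?thesis
  proof
    assume "difference_op (tbr br \<omega>) (tD D Dh)"
    then have "tD D Dh (tbr br \<omega> p q) = tbr br \<omega> p (tD D Dh q) - tbr br \<omega> q (tD D Dh p)
      + tbr br \<omega> (tD D Dh p) (tD D Dh q)" for p q
      unfolding difference_op_def by blast
    then show "\<forall>x y. dCE1 br (adD br D) Dh x y + T2 D \<omega> x y = 0"
      using snd_difference_defect_tbr[OF assms(1,2),
          where Dh = Dh and p = "(x, 0)" and q = "(y, 0)" for x y]
      by (simp add: neg_eq_iff_add_eq_0)
  next
    assume "\<forall>x y. dCE1 br (adD br D) Dh x y + T2 D \<omega> x y = 0"
    then show "difference_op (tbr br \<omega>) (tD D Dh)"
      unfolding difference_op_def
      using linear_tD[OF lD assms(3)] fst_difference_defect_tbr[OF dop]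
        snd_difference_defect_tbr[OF assms(1,2), where Dh = Dh]
      by (subst pair_eq) simp
  qed
qed

lemma inf_deformation_iff_Z2:
  assumes "diff_lie_algebra br D"
  shows "inf_deformation br D \<omega> Dh \<longleftrightarrow> (\<omega>, Dh) \<in> Z2 br D"
proof (cases "alt2 \<omega> \<and> linear Dh")
  case True
  have "lie_algebra br" using assms by (simp add: diff_lie_algebra_def)
  with True show ?thesis
    using lie_algebra_tbr_iff difference_op_tbr_iff[OF assms]
    by (auto simp: inf_deformation_def diff_lie_algebra_def Z2_def C2_def delta2_def fun_eq_iff)
qed (auto simp: inf_deformation_def Z2_def C2_def)

lemma tphi_bracket_iff_dCE1:
  assumes "lie_algebra br"
  shows "tphi N (tbr br \<omega>1 (x, 0) (y, 0)) = tbr br \<omega>2 (tphi N (x, 0)) (tphi N (y, 0))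
    \<longleftrightarrow> \<omega>1 x y - \<omega>2 x y = dCE1 br (ad br) N x y"
proof -
  have b: "bilinear br" using assms by (simp add: lie_algebra_def)
  show ?thesis
    using lie_algebra_skew[OF assms, of "N x" y]
    by (auto simp: tphi_def tbr_def dCE1_def ad_def b[THEN bilinear_rzero] b[THEN bilinear_lzero]
        algebra_simps)
qed

lemma tphi_intertwines_tD_iff_T1:
  assumes "linear D"
  shows "(\<forall>p. tD D Dh2 (tphi N p) = tphi N (tD D Dh1 p)) \<longleftrightarrow> (\<forall>x. Dh1 x - Dh2 x = T1 D N x)"
proof
  assume "\<forall>p. tD D Dh2 (tphi N p) = tphi N (tD D Dh1 p)"
  show "\<forall>x. Dh1 x - Dh2 x = T1 D N x"
  proof
    fix x
    show "Dh1 x - Dh2 x = T1 D N x"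
      using \<open>\<forall>p. _\<close>[rule_format, of "(x, 0)"] linear_0[OF assms]
      by (simp add: tD_def tphi_def T1_def algebra_simps)
  qed
next
  assume "\<forall>x. Dh1 x - Dh2 x = T1 D N x"
  then show "\<forall>p. tD D Dh2 (tphi N p) = tphi N (tD D Dh1 p)"
    by (auto simp: tD_def tphi_def T1_def linear_add[OF assms] algebra_simps)
qed

lemma deform_equiv_iff_B2:
  assumes "diff_lie_algebra br D"
  shows "deform_equiv br D d1 d2 \<longleftrightarrow>
     ((\<lambda>x y. fst d1 x y - fst d2 x y), (\<lambda>x. snd d1 x - snd d2 x)) \<in> B2 br D"
proof -
  have la: "lie_algebra br" and lD: "linear D"
    using assms by (auto simp: diff_lie_algebra_def difference_op_def)
  have "deform_equiv br D d1 d2 \<longleftrightarrow> (\<exists>N. linear N \<and>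
      (\<forall>x y. fst d1 x y - fst d2 x y = dCE1 br (ad br) N x y) \<and>
      (\<forall>x. snd d1 x - snd d2 x = T1 D N x))"
    by (simp only: deform_equiv_def tphi_bracket_iff_dCE1[OF la] tphi_intertwines_tD_iff_T1[OF lD])
  then show ?thesis by (auto simp: B2_def delta1_def fun_eq_iff)
qed

theorem theorem4p6:
  fixes br :: "'a::real_vector \<Rightarrow> 'a \<Rightarrow> 'a" and D :: "'a \<Rightarrow> 'a"
  assumes "diff_lie_algebra br D"
  shows "\<exists>F. bij_betw F (deformations br D // deform_rel br D) (H2 br D) \<and>
           (\<forall>d \<in> deformations br D. F (deform_rel br D `` {d}) = coh_rel br D `` {d})"
proof -
  have deformations_eq: "deformations br D = Z2 br D"
    using inf_deformation_iff_Z2[OF assms] by (auto simp: deformations_def)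
  have rel_eq: "deform_rel br D = coh_rel br D"
    using deform_equiv_iff_B2[OF assms] deformations_eq by (auto simp: deform_rel_def coh_rel_def)
  show ?thesis
    by (rule exI[of _ id]) (simp add: deformations_eq rel_eq H2_def)
qed

end
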